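(* Let $G_1,G_2$ be $3$-edge colorable cubic graphs, and let $G_1\,Y\,G_2$ and $G_1\,H\,G_2$ be particular compositions of them. Let $c_1,c_2$ be proper $3$-edge colorings of $G_1$ and $d_1,d_2$ proper $3$-edge colorings of $G_2$. If $(c_1\,Y\,d_1)\sim(c_2\,Y\,d_2)$ in $G_1\,Y\,G_2$ (respectively $(c_1\,H\,d_1)\sim(c_2\,H\,d_2)$ in $G_1\,H\,G_2$), then $c_1\sim c_2$ in $G_1$ and $d_1\sim d_2$ in $G_2$.
   Context: Graphs are finite; multiple edges allowed, loops not. Proper $3$-edge colorings use colors $\{1,2,3\}$, adjacent edges receiving different colors. For colors $a\neq b$, an edge-Kempe chain is a connected component of the subgraph of edges colored $a$ or $b$; an edge-Kempe switch swaps $a,b$ on one chain; $\sim$ denotes equivalence under finite sequences of such switches. Composition Y: choose $v_1\in G_1$ with incident edges $x_j=v_1s_{1j}$ and $v_2\in G_2$ with incident edges $y_j=v_2s_{2j}$ ($j=1,2,3$); $G_1\,Y\,G_2$ deletes $v_1,v_2$ and adds edges $s_{1j}s_{2j}$. Composition H: choose edges $x=s_{11}s_{12}\in G_1$, $y=s_{21}s_{22}\in G_2$; $G_1\,H\,G_2$ deletes $x,y$ and adds $s_{11}s_{21},s_{12}s_{22}$. For proper $3$-edge colorings $c$ of $G_1$, $d$ of $G_2$: let $\hat d$ be obtained from $d$ by a global color permutation with $\hat d(y_j)=c(x_j)$; $c\,Y\,d$ colors $G_1-v_1$ by $c$, $G_2-v_2$ by $\hat d$, and $s_{1j}s_{2j}$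 by $c(x_j)$. Let $\tilde d$ be obtained from $d$ by a global color permutation with $\tilde d(y)=c(x)$; $c\,H\,d$ colors $G_1-x$ by $c$, $G_2-y$ by $\tilde d$, and both new edges by $c(x)$. *)

theory Defs
  imports Main
begin

text \<open>Finite multigraphs without loops: a vertex set, an edge set, and for every
edge its set of (exactly two) endpoints. Parallel edges are allowed.\<close>

record ('v, 'e) mgraph =
  verts :: "'v set"
  edges :: "'e set"
  ends  :: "'e \<Rightarrow> 'v set"

definition multigraph :: "('v, 'e) mgraph \<Rightarrow> bool" where
  "multigraph G \<longleftrightarrow> finite (verts G) \<and> finite (edges G) \<and>
     (\<forall>e\<in>edges G. ends G e \<subseteq> verts G \<and> card (ends G e) = 2)"

definition incident_edges :: "('v, 'e) mgraph \<Rightarrow> 'v \<Rightarrow> 'e set" where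
  "incident_edges G v = {e \<in> edges G. v \<in> ends G e}"

definition cubic :: "('v, 'e) mgraph \<Rightarrow> bool" where
  "cubic G \<longleftrightarrow> multigraph G \<and> (\<forall>v\<in>verts G. card (incident_edges G v) = 3)"

text \<open>Proper 3-edge colourings with colours 1,2,3 (values outside the edge set are irrelevant).\<close>

definition proper_3col :: "('v, 'e) mgraph \<Rightarrow> ('e \<Rightarrow> nat) \<Rightarrow> bool" where
  "proper_3col G c \<longleftrightarrow> (\<forall>e\<in>edges G. c e \<in> {1,2,3}) \<and>
     (\<forall>e\<in>edges G. \<forall>f\<in>edges G. e \<noteq> f \<and> ends G e \<inter> ends G f \<noteq> {} \<longrightarrow> c e \<noteq> c f)"

definition three_edge_colorable :: "('v, 'e) mgraph \<Rightarrow> bool" where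
  "three_edge_colorable G \<longleftrightarrow> (\<exists>c. proper_3col G c)"

definition kempe_adj :: "('v, 'e) mgraph \<Rightarrow> ('e \<Rightarrow> nat) \<Rightarrow> nat \<Rightarrow> nat \<Rightarrow> 'e \<Rightarrow> 'e \<Rightarrow> bool" where
  "kempe_adj G c a b e f \<longleftrightarrow> e \<in> edges G \<and> f \<in> edges G \<and> c e \<in> {a, b} \<and> c f \<in> {a, b} \<and>
     ends G e \<inter> ends G f \<noteq> {}"

definition kempe_chain :: "('v, 'e) mgraph \<Rightarrow> ('e \<Rightarrow> nat) \<Rightarrow> nat \<Rightarrow> nat \<Rightarrow> 'e \<Rightarrow> 'e set" where
  "kempe_chain G c a b e = {f. (kempe_adj G c a b)\<^sup>*\<^sup>* e f}"

definition swap_col :: "nat \<Rightarrow> nat \<Rightarrow> nat \<Rightarrow> nat" where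
  "swap_col a b k = (if k = a then b else if k = b then a else k)"

definition kempe_step :: "('v, 'e) mgraph \<Rightarrow> ('e \<Rightarrow> nat) \<Rightarrow> ('e \<Rightarrow> nat) \<Rightarrow> bool" where
  "kempe_step G c c' \<longleftrightarrow> (\<exists>a b e. a \<in> {1,2,3} \<and> b \<in> {1,2,3} \<and> a \<noteq> b \<and>
      e \<in> edges G \<and> c e \<in> {a, b} \<and>
      c' = (\<lambda>f. if f \<in> kempe_chain G c a b e then swap_col a b (c f) else c f))"

definition kempe_equiv :: "('v, 'e) mgraph \<Rightarrow> ('e \<Rightarrow> nat) \<Rightarrow> ('e \<Rightarrow> nat) \<Rightarrow> bool" where
  "kempe_equiv G c c' \<longleftrightarrow> (\<exists>c''. (kempe_step G)\<^sup>*\<^sup>* c c'' \<and> (\<forall>e\<in>edges G. c'' e = c' e))"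

definition other_end :: "('v, 'e) mgraph \<Rightarrow> 'e \<Rightarrow> 'v \<Rightarrow> 'v" where
  "other_end G e v = (THE u. ends G e = {v, u})"

text \<open>The incident edges of v1 are x 1, x 2, x 3 and those of v2 are y 1, y 2, y 3.
Edges of the result: Inl (Inl e) old edges of G1, Inl (Inr e) old edges of G2,
Inr j (j = 1,2,3) the new edge s_{1j} s_{2j}.\<close>

definition valid_Y_choice :: "('v, 'e) mgraph \<Rightarrow> 'v \<Rightarrow> (nat \<Rightarrow> 'e) \<Rightarrow> bool" where
  "valid_Y_choice G v x \<longleftrightarrow> v \<in> verts G \<and> bij_betw x {1,2,3} (incident_edges G v)"

definition compY ::
  "('v1, 'e1) mgraph \<Rightarrow> 'v1 \<Rightarrow> (nat \<Rightarrow> 'e1) \<Rightarrow> ('v2, 'e2) mgraph \<Rightarrow> 'v2 \<Rightarrow> (nat \<Rightarrow> 'e2)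
     \<Rightarrow> ('v1 + 'v2, ('e1 + 'e2) + nat) mgraph" where
  "compY G1 v1 x G2 v2 y =
     \<lparr> verts = Inl ` (verts G1 - {v1}) \<union> Inr ` (verts G2 - {v2}),
       edges = Inl ` Inl ` (edges G1 - incident_edges G1 v1)
             \<union> Inl ` Inr ` (edges G2 - incident_edges G2 v2) \<union> Inr ` {1,2,3},
       ends = (\<lambda>E. case E of
                 Inl (Inl e) \<Rightarrow> Inl ` ends G1 e
               | Inl (Inr e) \<Rightarrow> Inr ` ends G2 e
               | Inr j \<Rightarrow> {Inl (other_end G1 (x j) v1), Inr (other_end G2 (y j) v2)}) \<rparr>"

text \<open>c Y d, where sigma is the global colour permutation with sigma (d (y j)) = c (x j).\<close>

definition colY :: "(nat \<Rightarrow> 'e1) \<Rightarrow> ('e1 \<Rightarrow> nat) \<Rightarrow> (nat \<Rightarrow> nat) \<Rightarrow> ('e2 \<Rightarrow> nat)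
     \<Rightarrow> ('e1 + 'e2) + nat \<Rightarrow> nat" where
  "colY x c \<sigma> d = (\<lambda>E. case E of
       Inl (Inl e) \<Rightarrow> c e
     | Inl (Inr e) \<Rightarrow> \<sigma> (d e)
     | Inr j \<Rightarrow> c (x j))"

text \<open>Composition H: edge x with endpoints s11, s12 in G1, edge y with endpoints s21, s22
in G2; new edges Inr 1 = s11 s21 and Inr 2 = s12 s22.\<close>

definition valid_H_choice :: "('v, 'e) mgraph \<Rightarrow> 'e \<Rightarrow> 'v \<Rightarrow> 'v \<Rightarrow> bool" where
  "valid_H_choice G x s1 s2 \<longleftrightarrow> x \<in> edges G \<and> ends G x = {s1, s2}"

definition compH ::
  "('v1, 'e1) mgraph \<Rightarrow> 'e1 \<Rightarrow> 'v1 \<Rightarrow> 'v1 \<Rightarrow> ('v2, 'e2) mgraph \<Rightarrow> 'e2 \<Rightarrow> 'v2 \<Rightarrow> 'v2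
     \<Rightarrow> ('v1 + 'v2, ('e1 + 'e2) + nat) mgraph" where
  "compH G1 x s11 s12 G2 y s21 s22 =
     \<lparr> verts = Inl ` verts G1 \<union> Inr ` verts G2,
       edges = Inl ` Inl ` (edges G1 - {x}) \<union> Inl ` Inr ` (edges G2 - {y}) \<union> Inr ` {1,2},
       ends = (\<lambda>E. case E of
                 Inl (Inl e) \<Rightarrow> Inl ` ends G1 e
               | Inl (Inr e) \<Rightarrow> Inr ` ends G2 e
               | Inr j \<Rightarrow> (if j = 1 then {Inl s11, Inr s21} else {Inl s12, Inr s22})) \<rparr>"

text \<open>c H d, where sigma is a global colour permutation with sigma (d y) = c x.\<close>

definition colH :: "'e1 \<Rightarrow> ('e1 \<Rightarrow> nat) \<Rightarrow> (nat \<Rightarrow> nat) \<Rightarrow> ('e2 \<Rightarrow> nat)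
     \<Rightarrow> ('e1 + 'e2) + nat \<Rightarrow> nat" where
  "colH x c \<sigma> d = (\<lambda>E. case E of
       Inl (Inl e) \<Rightarrow> c e
     | Inl (Inr e) \<Rightarrow> \<sigma> (d e)
     | Inr j \<Rightarrow> c x)"

end

theory Submission
  imports Defs
begin

text \<open>
  A Kempe switch in a composition restricts, on the edges coming from G1, to a switch of a
  union of Kempe chains of G1, which is again a sequence of Kempe switches. The only edges
  where this could fail are the new edges of the cut, and there the parity lemma decides:
  in a proper 3-edge-colouring every colour meets a cut of a cubic graph with the parity of
  the number of vertices on one side, so the three cut edges of a Y composition always get
  distinct colours and the two cut edges of an H composition always get equal colours. A
  switch therefore moves all cut edges of its colours together. The G2 side follows by
  symmetry of the composition, after undoing the global colour permutation.
\<close>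

section \<open>Kempe chains and Kempe equivalence\<close>

definition swap_on :: "'e set \<Rightarrow> nat \<Rightarrow> nat \<Rightarrow> ('e \<Rightarrow> nat) \<Rightarrow> 'e \<Rightarrow> nat" where
  "swap_on U a b c = (\<lambda>f. if f \<in> U then swap_col a b (c f) else c f)"

lemma kempe_step_iff:
  "kempe_step G c c' \<longleftrightarrow> (\<exists>a b e. a \<in> {1,2,3} \<and> b \<in> {1,2,3} \<and> a \<noteq> b \<and>
      e \<in> edges G \<and> c e \<in> {a, b} \<and> c' = swap_on (kempe_chain G c a b e) a b c)"
  by (simp add: kempe_step_def swap_on_def)

lemma swap_col_mem_iff: "swap_col a b k \<in> {a, b} \<longleftrightarrow> k \<in> {a, b}"
  by (auto simp: swap_col_def)

lemma swap_col_eq_iff: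
  "a \<noteq> b \<Longrightarrow> k \<in> {a, b} \<Longrightarrow> l \<in> {a, b} \<Longrightarrow> swap_col a b k = l \<longleftrightarrow> k \<noteq> l"
  by (auto simp: swap_col_def)

lemma swap_on_mem_iff: "swap_on U a b c f \<in> {a, b} \<longleftrightarrow> c f \<in> {a, b}"
  unfolding swap_on_def using swap_col_mem_iff[of a b "c f"] by simp

lemma kempe_adj_swap_on: "kempe_adj G (swap_on U a b c) a b = kempe_adj G c a b"
  unfolding kempe_adj_def fun_eq_iff swap_on_mem_iff by simp

lemma kempe_chain_self [simp]: "e \<in> kempe_chain G c a b e"
  by (simp add: kempe_chain_def)

lemma kempe_chain_step:
  "f \<in> kempe_chain G c a b e \<Longrightarrow> kempe_adj G c a b f g \<Longrightarrow> g \<in> kempe_chain G c a b e"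
  by (simp add: kempe_chain_def rtranclp.rtrancl_into_rtrancl)

lemma kempe_chain_trans:
  "f \<in> kempe_chain G c a b e \<Longrightarrow> g \<in> kempe_chain G c a b f \<Longrightarrow> g \<in> kempe_chain G c a b e"
  by (simp add: kempe_chain_def)

lemma kempe_chain_sym:
  "f \<in> kempe_chain G c a b e \<Longrightarrow> e \<in> kempe_chain G c a b f"
proof -
  have "symp (kempe_adj G c a b)"
    by (auto simp: symp_def kempe_adj_def)
  then show "f \<in> kempe_chain G c a b e \<Longrightarrow> e \<in> kempe_chain G c a b f"
    unfolding kempe_chain_def by (simp add: symp_rtranclp[THEN sympD])
qed

lemma kempe_chain_coloured:
  assumes "e \<in> edges G" "c e \<in> {a, b}" "f \<in> kempe_chain G c a b e"
  shows "f \<in> edges G" "c f \<in> {a, b}"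
proof -
  have "(kempe_adj G c a b)\<^sup>*\<^sup>* e f"
    using assms(3) by (simp add: kempe_chain_def)
  then have "f \<in> edges G \<and> c f \<in> {a, b}"
    by (induction rule: rtranclp_induct) (use assms in \<open>auto simp: kempe_adj_def\<close>)
  then show "f \<in> edges G" "c f \<in> {a, b}" by blast+
qed

lemma kempe_equiv_if_agree: "\<forall>e\<in>edges G. c e = d e \<Longrightarrow> kempe_equiv G c d"
  unfolding kempe_equiv_def by blast

lemma kempe_equiv_refl: "kempe_equiv G c c"
  by (simp add: kempe_equiv_if_agree)

lemma kempe_step_kempe_equiv: "kempe_step G c d \<Longrightarrow> kempe_equiv G c d"
  unfolding kempe_equiv_def by blast

lemma kempe_step_agree:
  assumes "kempe_step G c c'" "\<forall>e\<in>edges G. c e = d e"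
  obtains d' where "kempe_step G d d'" "\<forall>e\<in>edges G. c' e = d' e"
proof -
  obtain a b e where ab: "a \<in> {1,2,3}" "b \<in> {1,2,3}" "a \<noteq> b" "e \<in> edges G" "c e \<in> {a, b}"
    and c': "c' = swap_on (kempe_chain G c a b e) a b c"
    using assms(1) by (auto simp: kempe_step_iff)
  have "kempe_adj G c a b = kempe_adj G d a b"
    using assms(2) by (auto simp: kempe_adj_def fun_eq_iff)
  then have chain: "kempe_chain G c a b e = kempe_chain G d a b e"
    by (simp add: kempe_chain_def)
  show thesis
  proof
    show "kempe_step G d (swap_on (kempe_chain G d a b e) a b d)"
      unfolding kempe_step_iff using ab assms(2) by auto
    show "\<forall>f\<in>edges G. c' f = swap_on (kempe_chain G d a b e) a b d f"
      using assms(2) by (simp add: c' chain swap_on_def)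
  qed
qed

lemma kempe_steps_agree:
  assumes "(kempe_step G)\<^sup>*\<^sup>* c c'" "\<forall>e\<in>edges G. c e = d e"
  obtains d' where "(kempe_step G)\<^sup>*\<^sup>* d d'" "\<forall>e\<in>edges G. c' e = d' e"
proof -
  from assms have "\<exists>d'. (kempe_step G)\<^sup>*\<^sup>* d d' \<and> (\<forall>e\<in>edges G. c' e = d' e)"
  proof (induction rule: rtranclp_induct)
    case (step c1 c2)
    then obtain d1 where "(kempe_step G)\<^sup>*\<^sup>* d d1" "\<forall>e\<in>edges G. c1 e = d1 e" by blast
    moreover obtain d2 where "kempe_step G d1 d2" "\<forall>e\<in>edges G. c2 e = d2 e"
      using kempe_step_agree[OF step(2) \<open>\<forall>e\<in>edges G. c1 e = d1 e\<close>] .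
    ultimately show ?case by (meson rtranclp.rtrancl_into_rtrancl)
  qed blast
  then show thesis using that by blast
qed

lemma kempe_equiv_trans:
  assumes "kempe_equiv G c d" "kempe_equiv G d e"
  shows "kempe_equiv G c e"
proof -
  obtain c1 where c1: "(kempe_step G)\<^sup>*\<^sup>* c c1" "\<forall>f\<in>edges G. c1 f = d f"
    using assms(1) unfolding kempe_equiv_def by blast
  obtain d1 where d1: "(kempe_step G)\<^sup>*\<^sup>* d d1" "\<forall>f\<in>edges G. d1 f = e f"
    using assms(2) unfolding kempe_equiv_def by blast
  obtain c2 where "(kempe_step G)\<^sup>*\<^sup>* c1 c2" "\<forall>f\<in>edges G. d1 f = c2 f"
    using kempe_steps_agree[OF d1(1)] c1(2) by (metis)
  then show ?thesis
    using c1(1) d1(2) unfolding kempe_equiv_def by (metis rtranclp_trans)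
qed

lemma kempe_step_proper:
  assumes "kempe_step G c c'" "proper_3col G c"
  shows "proper_3col G c'"
proof -
  obtain a b e where ab: "a \<in> {1,2,3}" "b \<in> {1,2,3}" "a \<noteq> b" "e \<in> edges G" "c e \<in> {a, b}"
    and c': "c' = swap_on (kempe_chain G c a b e) a b c"
    using assms(1) by (auto simp: kempe_step_iff)
  define K where "K = kempe_chain G c a b e"
  have K_col: "c f \<in> {a, b}" if "f \<in> K" for f
    using kempe_chain_coloured[of e G c a b f] ab(4,5) that by (simp add: K_def)
  show ?thesis unfolding proper_3col_def
  proof (intro conjI ballI impI)
    fix f assume "f \<in> edges G"
    then show "c' f \<in> {1,2,3}"
      using assms(2) ab K_col[of f]
      by (auto simp: proper_3col_def c' swap_on_def swap_col_def K_def)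
  next
    fix f g assume fg: "f \<in> edges G" "g \<in> edges G" "f \<noteq> g \<and> ends G f \<inter> ends G g \<noteq> {}"
    have ne: "c f \<noteq> c g" using assms(2) fg unfolding proper_3col_def by blast
    text \<open>Adjacent edges coloured a or b lie in the same chain, so they are swapped together.\<close>
    have same: "f \<in> K \<longleftrightarrow> g \<in> K" if "c f \<in> {a, b}" "c g \<in> {a, b}"
      using kempe_chain_step[of _ G c a b e] fg that unfolding K_def kempe_adj_def by blast
    show "c' f \<noteq> c' g"
      using ne same K_col[of f] K_col[of g] unfolding c' swap_on_def K_def[symmetric]
      by (auto simp: swap_col_def split: if_splits)
  qed
qed

lemma inj_on_incident_edges_if_proper:
  "proper_3col G C \<Longrightarrow> inj_on C (incident_edges G w)"
  by (auto simp: proper_3col_def incident_edges_def inj_on_def)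

lemma proper_3colI_incident:
  assumes "\<forall>e\<in>edges G. C e \<in> {1,2,3}" "\<And>w. inj_on C (incident_edges G w)"
  shows "proper_3col G C"
  unfolding proper_3col_def
proof (intro conjI ballI impI)
  fix e f assume "e \<in> edges G" "f \<in> edges G" "e \<noteq> f \<and> ends G e \<inter> ends G f \<noteq> {}"
  then obtain w where "e \<in> incident_edges G w" "f \<in> incident_edges G w" "e \<noteq> f"
    by (auto simp: incident_edges_def)
  then show "C e \<noteq> C f" using assms(2)[of w] by (auto dest: inj_onD)
qed (use assms(1) in blast)

text \<open>A switch on the chain of g that missed h would change whether g and h are equally
  coloured.\<close>

lemma kempe_chain_rigid_pair:
  assumes "proper_3col \<Gamma> C" "a \<in> {1,2,3}" "b \<in> {1,2,3}" "a \<noteq> b"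
    and "g \<in> edges \<Gamma>" "C g \<in> {a, b}" "C h \<in> {a, b}"
    and rigid: "\<And>C'. proper_3col \<Gamma> C' \<Longrightarrow> C' g = C' h \<longleftrightarrow> C g = C h"
  shows "h \<in> kempe_chain \<Gamma> C a b g"
proof (rule ccontr)
  assume h: "h \<notin> kempe_chain \<Gamma> C a b g"
  define C' where "C' = swap_on (kempe_chain \<Gamma> C a b g) a b C"
  have "kempe_step \<Gamma> C C'"
    unfolding C'_def kempe_step_iff using assms(2-6) by blast
  then have "C' g = C' h \<longleftrightarrow> C g = C h"
    by (rule rigid[OF kempe_step_proper[OF _ assms(1)]])
  moreover have "C' h = C h" "C' g = swap_col a b (C g)"
    using h by (simp_all add: C'_def swap_on_def)
  ultimately show False
    using swap_col_eq_iff[OF assms(4,6,7)] by simp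
qed

lemma kempe_chain_subset_closed:
  assumes "e \<in> U" "\<forall>e\<in>U. \<forall>f. kempe_adj G c a b e f \<longrightarrow> f \<in> U"
  shows "kempe_chain G c a b e \<subseteq> U"
proof
  fix f assume "f \<in> kempe_chain G c a b e"
  then have "(kempe_adj G c a b)\<^sup>*\<^sup>* e f" by (simp add: kempe_chain_def)
  then show "f \<in> U"
    by (induction rule: rtranclp_induct) (use assms in blast)+
qed

text \<open>Peel off one chain at a time.\<close>

lemma kempe_equiv_swap_on_closed:
  assumes "finite U" "U \<subseteq> edges G" "\<forall>e\<in>U. c e \<in> {a, b}"
    and "\<forall>e\<in>U. \<forall>f. kempe_adj G c a b e f \<longrightarrow> f \<in> U"
    and "a \<in> {1,2,3}" "b \<in> {1,2,3}" "a \<noteq> b"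
  shows "kempe_equiv G c (swap_on U a b c)"
  using assms
proof (induction "card U" arbitrary: U c rule: less_induct)
  case less
  show ?case
  proof (cases "U = {}")
    case True
    then show ?thesis by (simp add: kempe_equiv_if_agree swap_on_def)
  next
    case False
    then obtain e where e: "e \<in> U" by blast
    define K where "K = kempe_chain G c a b e"
    have KU: "K \<subseteq> U"
      unfolding K_def using e less.prems(4) by (rule kempe_chain_subset_closed)
    define c1 where "c1 = swap_on K a b c"
    have step: "kempe_step G c c1"
      unfolding kempe_step_iff c1_def K_def using less.prems e
      by (intro exI[of _ a] exI[of _ b] exI[of _ e]) auto
    have smaller: "card (U - K) < card U"
    proof (rule psubset_card_mono)
      show "finite U" by (fact less.prems(1))
      show "U - K \<subset> U" using e kempe_chain_self[of e G c a b] unfolding K_def by blast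
    qed
    have "kempe_equiv G c1 (swap_on (U - K) a b c1)" (is "kempe_equiv G c1 ?c2")
    proof (rule less.hyps[OF smaller])
      show "\<forall>e\<in>U - K. c1 e \<in> {a, b}"
        using less.prems(3) unfolding c1_def swap_on_mem_iff by blast
      show "\<forall>e'\<in>U - K. \<forall>f. kempe_adj G c1 a b e' f \<longrightarrow> f \<in> U - K"
      proof (intro ballI allI impI)
        fix e' f assume e': "e' \<in> U - K" and "kempe_adj G c1 a b e' f"
        then have adj: "kempe_adj G c a b e' f" by (simp add: c1_def kempe_adj_swap_on)
        have "f \<notin> K"
          using e' kempe_chain_step[of f G c a b e e'] adj by (auto simp: K_def kempe_adj_def)
        then show "f \<in> U - K" using less.prems(4) e' adj by blast
      qed
    qed (use less.prems in auto)
    moreover have "?c2 = swap_on U a b c"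
      using KU by (auto simp: swap_on_def c1_def fun_eq_iff)
    ultimately show ?thesis
      using kempe_equiv_trans[OF kempe_step_kempe_equiv[OF step]] by simp
  qed
qed

lemma kempe_equiv_agree_cong:
  assumes "kempe_equiv G c d" "\<forall>e\<in>edges G. c' e = c e" "\<forall>e\<in>edges G. d e = d' e"
  shows "kempe_equiv G c' d'"
proof -
  have "kempe_equiv G c d'"
    using assms(1) kempe_equiv_if_agree[OF assms(3)] by (rule kempe_equiv_trans)
  then show ?thesis
    by (rule kempe_equiv_trans[OF kempe_equiv_if_agree[OF assms(2)]])
qed

lemma kempe_equiv_swap_colours:
  assumes "finite (edges G)" "a \<in> {1,2,3}" "b \<in> {1,2,3}"
  shows "kempe_equiv G c (swap_col a b \<circ> c)"
proof (cases "a = b")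
  case True
  then show ?thesis by (simp add: kempe_equiv_if_agree swap_col_def)
next
  case False
  define U where "U = {e \<in> edges G. c e \<in> {a, b}}"
  have "kempe_equiv G c (swap_on U a b c)"
    by (rule kempe_equiv_swap_on_closed) (use assms False in \<open>auto simp: U_def kempe_adj_def\<close>)
  moreover have "\<forall>e\<in>edges G. swap_on U a b c e = (swap_col a b \<circ> c) e"
    by (simp add: swap_on_def U_def swap_col_def)
  ultimately show ?thesis by (rule kempe_equiv_trans[OF _ kempe_equiv_if_agree])
qed

lemma permutation3_as_swaps:
  assumes "bij_betw \<sigma> {1,2,3} {1,2,3::nat}" "k \<in> {1,2,3}"
  shows "\<sigma> k = swap_col 1 (\<sigma> 1) (swap_col 2 (swap_col 1 (\<sigma> 1) (\<sigma> 2)) k)"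
proof -
  have range: "\<sigma> 1 \<in> {1,2,3}" "\<sigma> 2 \<in> {1,2,3}" "\<sigma> 3 \<in> {1,2,3}"
    using assms(1) by (auto simp: bij_betw_def)
  have "inj_on \<sigma> {1,2,3}" using assms(1) by (simp add: bij_betw_def)
  then have "\<sigma> 1 \<noteq> \<sigma> 2" "\<sigma> 1 \<noteq> \<sigma> 3" "\<sigma> 2 \<noteq> \<sigma> 3"
    by (auto dest: inj_onD)
  moreover from range have "\<sigma> 1 = 1 \<or> \<sigma> 1 = 2 \<or> \<sigma> 1 = 3" "\<sigma> 2 = 1 \<or> \<sigma> 2 = 2 \<or> \<sigma> 2 = 3"
    "\<sigma> 3 = 1 \<or> \<sigma> 3 = 2 \<or> \<sigma> 3 = 3" by simp_all
  moreover from assms(2) have "k = 1 \<or> k = 2 \<or> k = 3" by simp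
  ultimately show ?thesis by (elim disjE) (simp_all add: swap_col_def)
qed

lemma kempe_equiv_permute_colours:
  assumes "finite (edges G)" "bij_betw \<sigma> {1,2,3} {1,2,3::nat}" "\<forall>e\<in>edges G. c e \<in> {1,2,3}"
  shows "kempe_equiv G c (\<sigma> \<circ> c)"
proof -
  define t where "t = swap_col 1 (\<sigma> 1) (\<sigma> 2)"
  have \<sigma>12: "\<sigma> 1 \<in> {1,2,3}" "\<sigma> 2 \<in> {1,2,3}" using assms(2) by (auto simp: bij_betw_def)
  then have "t \<in> {1,2,3}" by (auto simp: t_def swap_col_def)
  then have "kempe_equiv G c (swap_col 2 t \<circ> c)"
    using assms(1) by (intro kempe_equiv_swap_colours) auto
  moreover have "kempe_equiv G (swap_col 2 t \<circ> c) (swap_col 1 (\<sigma> 1) \<circ> (swap_col 2 t \<circ> c))"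
    using assms(1) \<sigma>12 by (intro kempe_equiv_swap_colours) auto
  moreover have "\<forall>e\<in>edges G. (swap_col 1 (\<sigma> 1) \<circ> (swap_col 2 t \<circ> c)) e = (\<sigma> \<circ> c) e"
  proof
    fix e assume "e \<in> edges G"
    then have "c e \<in> {1,2,3}" using assms(3) by blast
    then show "(swap_col 1 (\<sigma> 1) \<circ> (swap_col 2 t \<circ> c)) e = (\<sigma> \<circ> c) e"
      unfolding t_def o_apply by (rule permutation3_as_swaps[OF assms(2), symmetric])
  qed
  ultimately show ?thesis
    by (rule kempe_equiv_trans[OF _ kempe_equiv_trans[OF _ kempe_equiv_if_agree]])
qed

lemma kempe_equiv_unpermute:
  assumes "kempe_equiv G (\<sigma>1 \<circ> d1) (\<sigma>2 \<circ> d2)" "finite (edges G)"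
    "proper_3col G d1" "proper_3col G d2"
    "bij_betw \<sigma>1 {1,2,3} {1,2,3::nat}" "bij_betw \<sigma>2 {1,2,3} {1,2,3::nat}"
  shows "kempe_equiv G d1 d2"
proof -
  have d: "\<forall>e\<in>edges G. d1 e \<in> {1,2,3}" "\<forall>e\<in>edges G. d2 e \<in> {1,2,3}"
    using assms(3,4) by (simp_all add: proper_3col_def)
  define \<tau> where "\<tau> = the_inv_into {1,2,3} \<sigma>2"
  have \<tau>: "bij_betw \<tau> {1,2,3} {1,2,3::nat}"
    unfolding \<tau>_def by (rule bij_betw_the_inv_into[OF assms(6)])
  have "\<forall>e\<in>edges G. (\<sigma>2 \<circ> d2) e \<in> {1,2,3}"
    using d(2) bij_betw_apply[OF assms(6)] by simp
  then have unpermuted: "kempe_equiv G (\<sigma>2 \<circ> d2) (\<tau> \<circ> (\<sigma>2 \<circ> d2))"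
    by (rule kempe_equiv_permute_colours[OF assms(2) \<tau>])
  have "\<forall>e\<in>edges G. (\<tau> \<circ> (\<sigma>2 \<circ> d2)) e = d2 e"
    using d(2) the_inv_into_f_f[OF bij_betw_imp_inj_on[OF assms(6)]] by (simp add: \<tau>_def)
  with unpermuted have "kempe_equiv G (\<sigma>2 \<circ> d2) d2"
    by (rule kempe_equiv_trans[OF _ kempe_equiv_if_agree])
  with assms(1) have "kempe_equiv G (\<sigma>1 \<circ> d1) d2"
    by (rule kempe_equiv_trans)
  then show ?thesis
    by (rule kempe_equiv_trans[OF kempe_equiv_permute_colours[OF assms(2,5) d(1)]])
qed

lemma proper_3col_permute:
  assumes "proper_3col G d" "bij_betw \<sigma> {1,2,3} {1,2,3::nat}"
  shows "proper_3col G (\<sigma> \<circ> d)"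
proof -
  have "\<sigma> (d e) \<noteq> \<sigma> (d f)" if "e \<in> edges G" "f \<in> edges G" "d e \<noteq> d f" for e f
    using that assms inj_onD[OF bij_betw_imp_inj_on[OF assms(2)]] by (auto simp: proper_3col_def)
  then show ?thesis
    using assms bij_betw_apply[OF assms(2)] by (auto simp: proper_3col_def)
qed

section \<open>Pulling Kempe equivalence back along edge maps\<close>

text \<open>Such a map makes the preimage of a Kempe chain of \<Gamma> a union of Kempe chains of G.\<close>

definition reflects_kempe_chains :: "('V, 'E) mgraph \<Rightarrow> ('v, 'e) mgraph \<Rightarrow> ('e \<Rightarrow> 'E) \<Rightarrow> bool" where
  "reflects_kempe_chains \<Gamma> G \<pi> \<longleftrightarrow>
     (\<forall>C a b e f. proper_3col \<Gamma> C \<and> a \<in> {1,2,3} \<and> b \<in> {1,2,3} \<and> a \<noteq> b \<and>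
        kempe_adj G (C \<circ> \<pi>) a b e f \<longrightarrow> \<pi> f \<in> kempe_chain \<Gamma> C a b (\<pi> e))"

lemma reflects_kempe_chainsD:
  assumes "reflects_kempe_chains \<Gamma> G \<pi>" "proper_3col \<Gamma> C" "a \<in> {1,2,3}" "b \<in> {1,2,3}" "a \<noteq> b"
    "kempe_adj G (C \<circ> \<pi>) a b e f"
  shows "\<pi> f \<in> kempe_chain \<Gamma> C a b (\<pi> e)"
  using assms unfolding reflects_kempe_chains_def by blast

lemma kempe_step_pullback:
  assumes "kempe_step \<Gamma> C C'" "proper_3col \<Gamma> C" "reflects_kempe_chains \<Gamma> G \<pi>" "finite (edges G)"
  shows "kempe_equiv G (C \<circ> \<pi>) (C' \<circ> \<pi>)"
proof -
  obtain a b e0 where ab: "a \<in> {1,2,3}" "b \<in> {1,2,3}" "a \<noteq> b" "e0 \<in> edges \<Gamma>" "C e0 \<in> {a, b}"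
    and C': "C' = swap_on (kempe_chain \<Gamma> C a b e0) a b C"
    using assms(1) by (auto simp: kempe_step_iff)
  define K where "K = kempe_chain \<Gamma> C a b e0"
  define U where "U = {e \<in> edges G. \<pi> e \<in> K}"
  have "kempe_equiv G (C \<circ> \<pi>) (swap_on U a b (C \<circ> \<pi>))"
  proof (rule kempe_equiv_swap_on_closed)
    show "\<forall>e\<in>U. (C \<circ> \<pi>) e \<in> {a, b}"
      using kempe_chain_coloured(2)[of e0 \<Gamma> C a b, OF ab(4,5)] unfolding U_def K_def by auto
    show "\<forall>e\<in>U. \<forall>f. kempe_adj G (C \<circ> \<pi>) a b e f \<longrightarrow> f \<in> U"
    proof (intro ballI allI impI)
      fix e f assume "e \<in> U" and adj: "kempe_adj G (C \<circ> \<pi>) a b e f"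
      have "\<pi> e \<in> K" using \<open>e \<in> U\<close> by (simp add: U_def)
      moreover have "\<pi> f \<in> kempe_chain \<Gamma> C a b (\<pi> e)"
        using reflects_kempe_chainsD[OF assms(3,2) ab(1-3) adj] .
      ultimately have "\<pi> f \<in> K"
        unfolding K_def by (rule kempe_chain_trans)
      then show "f \<in> U"
        using adj by (simp add: U_def kempe_adj_def)
    qed
  qed (use assms(4) ab in \<open>simp_all add: U_def\<close>)
  moreover have "\<forall>e\<in>edges G. swap_on U a b (C \<circ> \<pi>) e = (C' \<circ> \<pi>) e"
    unfolding C' K_def[symmetric] U_def by (simp add: swap_on_def)
  ultimately show ?thesis by (rule kempe_equiv_trans[OF _ kempe_equiv_if_agree])
qed

lemma kempe_equiv_pullback:
  assumes "kempe_equiv \<Gamma> C1 C2" "proper_3col \<Gamma> C1" "reflects_kempe_chains \<Gamma> G \<pi>"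
    "\<pi> ` edges G \<subseteq> edges \<Gamma>" "finite (edges G)"
  shows "kempe_equiv G (C1 \<circ> \<pi>) (C2 \<circ> \<pi>)"
proof -
  obtain C3 where steps: "(kempe_step \<Gamma>)\<^sup>*\<^sup>* C1 C3" and agree: "\<forall>e\<in>edges \<Gamma>. C3 e = C2 e"
    using assms(1) unfolding kempe_equiv_def by blast
  from steps have "kempe_equiv G (C1 \<circ> \<pi>) (C3 \<circ> \<pi>) \<and> proper_3col \<Gamma> C3"
  proof (induction rule: rtranclp_induct)
    case base
    show ?case using assms(2) by (simp add: kempe_equiv_refl)
  next
    case (step C C')
    then have IH: "kempe_equiv G (C1 \<circ> \<pi>) (C \<circ> \<pi>)" "proper_3col \<Gamma> C" by blast+
    show ?case
      using kempe_equiv_trans[OF IH(1) kempe_step_pullback[OF step(2) IH(2) assms(3,5)]]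
        kempe_step_proper[OF step(2) IH(2)] by blast
  qed
  then show ?thesis
    by (rule kempe_equiv_agree_cong[OF conjunct1]) (use agree assms(4) in auto)
qed

lemma reflects_kempe_chains_if_adjacency_preserving:
  assumes "\<pi> ` edges G \<subseteq> edges \<Gamma>"
    and "\<And>e f. e \<in> edges G \<Longrightarrow> f \<in> edges G \<Longrightarrow> ends G e \<inter> ends G f \<noteq> {} \<Longrightarrow>
      ends \<Gamma> (\<pi> e) \<inter> ends \<Gamma> (\<pi> f) \<noteq> {}"
  shows "reflects_kempe_chains \<Gamma> G \<pi>"
  unfolding reflects_kempe_chains_def
proof (intro allI impI)
  fix C a b e f
  assume "proper_3col \<Gamma> C \<and> a \<in> {1,2,3} \<and> b \<in> {1,2,3} \<and> a \<noteq> b \<and> kempe_adj G (C \<circ> \<pi>) a b e f"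
  then have "kempe_adj \<Gamma> C a b (\<pi> e) (\<pi> f)"
    using assms by (auto simp: kempe_adj_def)
  then show "\<pi> f \<in> kempe_chain \<Gamma> C a b (\<pi> e)"
    by (rule kempe_chain_step[OF kempe_chain_self])
qed

lemma reflects_kempe_chains_iso:
  assumes "bij_betw \<phi> (edges \<Gamma>') (edges \<Gamma>)" "\<And>E. E \<in> edges \<Gamma>' \<Longrightarrow> ends \<Gamma> (\<phi> E) = \<psi> ` ends \<Gamma>' E"
  shows "reflects_kempe_chains \<Gamma> \<Gamma>' \<phi>"
proof (rule reflects_kempe_chains_if_adjacency_preserving)
  show "\<phi> ` edges \<Gamma>' \<subseteq> edges \<Gamma>" using assms(1) by (simp add: bij_betw_def)
  show "ends \<Gamma> (\<phi> e) \<inter> ends \<Gamma> (\<phi> f) \<noteq> {}"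
    if "e \<in> edges \<Gamma>'" "f \<in> edges \<Gamma>'" "ends \<Gamma>' e \<inter> ends \<Gamma>' f \<noteq> {}" for e f
    using that assms(2) by blast
qed

section \<open>The parity lemma\<close>

lemma parity_lemma:
  assumes "finite (edges G)" "finite W" "\<And>u. u \<in> W \<Longrightarrow> card (incident_edges G u) = 3"
    "proper_3col G C" "a \<in> {1,2,3}"
  shows "even (card {e \<in> edges G. C e = a \<and> odd (card (ends G e \<inter> W))}) \<longleftrightarrow> even (card W)"
proof -
  define A where "A = {e \<in> edges G. C e = a}"
  have fin_A: "finite A" using assms(1) by (simp add: A_def)
  have one: "card (A \<inter> {e. u \<in> ends G e}) = 1" if u: "u \<in> W" for u
  proof -
    have inj: "inj_on C (incident_edges G u)"
      using assms(4) by (rule inj_on_incident_edges_if_proper)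
    have "C ` incident_edges G u \<subseteq> {1,2,3}"
      using assms(4) unfolding proper_3col_def incident_edges_def by blast
    moreover have "card (C ` incident_edges G u) = card {1,2,3::nat}"
      using card_image[OF inj] assms(3)[OF u] by simp
    ultimately have "C ` incident_edges G u = {1,2,3}"
      using card_subset_eq[of "{1,2,3::nat}"] by blast
    then have "a \<in> C ` incident_edges G u" using assms(5) by simp
    then obtain e where e: "e \<in> incident_edges G u" "C e = a" by blast
    have "A \<inter> {e. u \<in> ends G e} = {e' \<in> incident_edges G u. C e' = a}"
      by (auto simp: A_def incident_edges_def)
    also have "\<dots> = {e}"
      using inj e unfolding inj_on_def by blast
    finally show ?thesis by simp
  qed
  text \<open>Double counting the pairs (u, e) with u \<in> W an end of an a-coloured edge e.\<close>
  have "card W = (\<Sum>u\<in>W. card (A \<inter> {e. u \<in> ends G e}))"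
    using one by simp
  also have "\<dots> = (\<Sum>u\<in>W. \<Sum>e\<in>A. of_bool (u \<in> ends G e))"
    using fin_A by simp
  also have "\<dots> = (\<Sum>e\<in>A. \<Sum>u\<in>W. of_bool (u \<in> ends G e))"
    by (rule sum.swap)
  also have "\<dots> = (\<Sum>e\<in>A. card (ends G e \<inter> W))"
    using assms(2) by (simp add: Int_commute Int_def)
  finally have "even (card W) \<longleftrightarrow> even (card {e \<in> A. odd (card (ends G e \<inter> W))})"
    using even_sum_iff[OF fin_A] by simp
  then show ?thesis by (simp add: A_def conj_assoc)
qed

lemma three_fibres_same_parity_imp_inj:
  assumes "\<And>a. a \<in> {1,2,3} \<Longrightarrow> even (card {j \<in> {1,2,3::nat}. p j = a}) \<longleftrightarrow> P"
    and "p 1 \<in> {1,2,3::nat}" "p 2 \<in> {1,2,3}" "p 3 \<in> {1,2,3}"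
  shows "inj_on p {1,2,3}"
proof -
  have fibre: "{j \<in> {1,2,3::nat}. p j = a} =
      (if p 1 = a then {1} else {}) \<union> (if p 2 = a then {2} else {}) \<union> (if p 3 = a then {3} else {})"
    for a by auto
  from assms(1)[of 1] assms(1)[of 2] assms(1)[of 3] assms(2-4) show ?thesis
    unfolding fibre by (auto simp: inj_on_def)
qed

lemma two_fibres_same_parity_imp_eq:
  assumes "\<And>a. a \<in> {1,2,3} \<Longrightarrow> even (card {j \<in> {1,2::nat}. p j = a}) \<longleftrightarrow> P"
    and "p 1 \<in> {1,2,3::nat}" "p 2 \<in> {1,2,3}"
  shows "p 1 = p 2"
proof -
  have fibre:
      "{j \<in> {1,2::nat}. p j = a} = (if p 1 = a then {1} else {}) \<union> (if p 2 = a then {2} else {})"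
    for a by auto
  from assms(1)[of 1] assms(1)[of 2] assms(1)[of 3] assms(2,3) show ?thesis
    unfolding fibre by auto
qed

section \<open>Symmetry of the compositions\<close>

lemma incident_edges_iso:
  assumes "bij_betw \<phi> (edges \<Gamma>') (edges \<Gamma>)" "\<And>E. E \<in> edges \<Gamma>' \<Longrightarrow> ends \<Gamma> (\<phi> E) = \<psi> ` ends \<Gamma>' E"
    "inj \<psi>"
  shows "incident_edges \<Gamma> (\<psi> w) = \<phi> ` incident_edges \<Gamma>' w"
proof -
  have "\<psi> w \<in> ends \<Gamma> (\<phi> E) \<longleftrightarrow> w \<in> ends \<Gamma>' E" if "E \<in> edges \<Gamma>'" for E
    using assms(2)[OF that] assms(3) by (auto dest: injD)
  moreover have "edges \<Gamma> = \<phi> ` edges \<Gamma>'"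
    using assms(1) by (simp add: bij_betw_def)
  ultimately show ?thesis
    by (auto simp: incident_edges_def)
qed

definition mirror_edge :: "('a + 'b) + nat \<Rightarrow> ('b + 'a) + nat" where
  "mirror_edge = map_sum (case_sum Inr Inl) id"

lemma mirror_edge_simps [simp]:
  "mirror_edge (Inl (Inl e)) = Inl (Inr e)" "mirror_edge (Inl (Inr e)) = Inl (Inl e)"
  "mirror_edge (Inr j) = Inr j"
  by (simp_all add: mirror_edge_def)

lemma inj_swap_sum: "inj (case_sum Inr Inl)"
  by (auto simp: inj_def split: sum.splits)

lemma bij_betw_mirror_edge_compY:
  "bij_betw mirror_edge (edges (compY G2 v2 y G1 v1 x)) (edges (compY G1 v1 x G2 v2 y))"
  by (rule bij_betw_byWitness[where f' = mirror_edge])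
    (auto simp: compY_def mirror_edge_def split: sum.splits)

lemma ends_compY_mirror_edge:
  "ends (compY G1 v1 x G2 v2 y) (mirror_edge E) = case_sum Inr Inl ` ends (compY G2 v2 y G1 v1 x) E"
proof (cases E)
  case (Inl E')
  then show ?thesis by (cases E') (auto simp: compY_def image_image)
qed (auto simp: compY_def)

lemma bij_betw_mirror_edge_compH:
  "bij_betw mirror_edge (edges (compH G2 y s21 s22 G1 x s11 s12))
    (edges (compH G1 x s11 s12 G2 y s21 s22))"
  by (rule bij_betw_byWitness[where f' = mirror_edge])
    (auto simp: compH_def mirror_edge_def split: sum.splits)

lemma ends_compH_mirror_edge:
  "ends (compH G1 x s11 s12 G2 y s21 s22) (mirror_edge E) =
    case_sum Inr Inl ` ends (compH G2 y s21 s22 G1 x s11 s12) E"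
proof (cases E)
  case (Inl E')
  then show ?thesis by (cases E') (auto simp: compH_def image_image)
qed (auto simp: compH_def)

section \<open>Y composition\<close>

lemma other_end_eq:
  assumes "card (ends G e) = 2" "v \<in> ends G e" "u \<in> ends G e" "u \<noteq> v"
  shows "other_end G e v = u"
proof -
  have "{v, u} \<subseteq> ends G e" "card {v, u} = card (ends G e)"
    using assms by auto
  moreover have "finite (ends G e)"
    using assms(1) card.infinite by fastforce
  ultimately have "ends G e = {v, u}"
    using card_subset_eq by blast
  then show ?thesis
    unfolding other_end_def using assms(4) by (auto simp: doubleton_eq_iff)
qed

lemma other_end_mem:
  assumes "card (ends G e) = 2" "v \<in> ends G e"
  shows "other_end G e v \<in> ends G e" "other_end G e v \<noteq> v"
proof -
  have "\<not> ends G e \<subseteq> {v}"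
    using card_mono[of "{v}" "ends G e"] assms(1) by auto
  then obtain u where "u \<in> ends G e" "u \<noteq> v" by blast
  with assms show "other_end G e v \<in> ends G e" "other_end G e v \<noteq> v"
    using other_end_eq by metis+
qed

locale Y_composition =
  fixes G1 :: "('v1, 'e1) mgraph" and v1 :: 'v1 and x :: "nat \<Rightarrow> 'e1"
    and G2 :: "('v2, 'e2) mgraph" and v2 :: 'v2 and y :: "nat \<Rightarrow> 'e2"
  assumes cubic1: "cubic G1" and cubic2: "cubic G2"
    and choice1: "valid_Y_choice G1 v1 x" and choice2: "valid_Y_choice G2 v2 y"
begin

abbreviation "\<Gamma> \<equiv> compY G1 v1 x G2 v2 y"

lemma mirrored: "Y_composition G2 v2 y G1 v1 x"
  using cubic1 cubic2 choice1 choice2 by unfold_locales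

lemma finite_edges1: "finite (edges G1)"
  and ends1: "e \<in> edges G1 \<Longrightarrow> card (ends G1 e) = 2 \<and> ends G1 e \<subseteq> verts G1"
  using cubic1 by (auto simp: cubic_def multigraph_def)

lemma finite_edges: "finite (edges \<Gamma>)"
  using cubic1 cubic2 by (simp add: compY_def cubic_def multigraph_def)

lemma edges_compY_simps [simp]:
  "Inl (Inl e) \<in> edges \<Gamma> \<longleftrightarrow> e \<in> edges G1 \<and> v1 \<notin> ends G1 e"
  "Inl (Inr f) \<in> edges \<Gamma> \<longleftrightarrow> f \<in> edges G2 \<and> v2 \<notin> ends G2 f"
  "Inr j \<in> edges \<Gamma> \<longleftrightarrow> j \<in> {1,2,3}"
  by (auto simp: compY_def incident_edges_def)

lemma edges_compY_cases:
  assumes "E \<in> edges \<Gamma>"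
  obtains (old1) e where "E = Inl (Inl e)" "e \<in> edges G1" "v1 \<notin> ends G1 e"
    | (old2) f where "E = Inl (Inr f)" "f \<in> edges G2" "v2 \<notin> ends G2 f"
    | (new) j where "E = Inr j" "j \<in> {1,2,3}"
  using assms by (auto simp: compY_def incident_edges_def)

lemma ends_compY_simps [simp]:
  "ends \<Gamma> (Inl (Inl e)) = Inl ` ends G1 e"
  "ends \<Gamma> (Inl (Inr f)) = Inr ` ends G2 f"
  "ends \<Gamma> (Inr j) = {Inl (other_end G1 (x j) v1), Inr (other_end G2 (y j) v2)}"
  by (simp_all add: compY_def)

lemma x_bij: "bij_betw x {1,2,3} (incident_edges G1 v1)"
  using choice1 by (simp add: valid_Y_choice_def)

lemma x_incident: "j \<in> {1,2,3} \<Longrightarrow> x j \<in> edges G1 \<and> v1 \<in> ends G1 (x j)"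
  using bij_betw_apply[OF x_bij] by (simp add: incident_edges_def)

lemma incident_v1_cases:
  assumes "v1 \<in> ends G1 e" "e \<in> edges G1"
  obtains j where "j \<in> {1,2,3}" "e = x j"
  using assms x_bij by (auto simp: bij_betw_def incident_edges_def)

definition embed :: "'e1 \<Rightarrow> ('e1 + 'e2) + nat" where
  "embed e = (if e \<in> incident_edges G1 v1 then Inr (the_inv_into {1,2,3} x e) else Inl (Inl e))"

lemma embed_x: "j \<in> {1,2,3} \<Longrightarrow> embed (x j) = Inr j"
  using bij_betw_apply[OF x_bij] the_inv_into_f_f[OF bij_betw_imp_inj_on[OF x_bij]]
  by (simp add: embed_def)

lemma embed_off_v1: "v1 \<notin> ends G1 e \<Longrightarrow> embed e = Inl (Inl e)"
  by (simp add: embed_def incident_edges_def)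

lemma embed_edges: "embed ` edges G1 \<subseteq> edges \<Gamma>"
proof
  fix E assume "E \<in> embed ` edges G1"
  then obtain e where e: "e \<in> edges G1" "E = embed e" by blast
  show "E \<in> edges \<Gamma>"
  proof (cases "v1 \<in> ends G1 e")
    case True
    then obtain j where "j \<in> {1,2,3}" "e = x j" using e(1) by (rule incident_v1_cases)
    then show ?thesis using e(2) by (simp add: embed_x)
  qed (use e in \<open>simp add: embed_off_v1\<close>)
qed

lemma inj_on_embed: "inj_on embed (edges G1)"
proof (rule inj_on_inverseI)
  fix e assume "e \<in> edges G1"
  then show "case_sum (case_sum id undefined) x (embed e) = e"
  proof (cases "v1 \<in> ends G1 e")
    case True
    then obtain j where "j \<in> {1,2,3}" "e = x j" using \<open>e \<in> edges G1\<close> by (rule incident_v1_cases)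
    then show ?thesis by (simp add: embed_x)
  qed (simp add: embed_off_v1)
qed

lemma colY_embed:
  assumes "e \<in> edges G1"
  shows "colY x c \<sigma> d (embed e) = c e"
proof (cases "v1 \<in> ends G1 e")
  case True
  then obtain j where "j \<in> {1,2,3}" "e = x j" using assms by (rule incident_v1_cases)
  then show ?thesis by (simp add: embed_x colY_def)
qed (simp add: embed_off_v1 colY_def)

lemma Inl_mem_ends_embed:
  assumes "e \<in> edges G1" "u \<in> ends G1 e" "u \<noteq> v1"
  shows "Inl u \<in> ends \<Gamma> (embed e)"
proof (cases "v1 \<in> ends G1 e")
  case True
  then obtain j where j: "j \<in> {1,2,3}" "e = x j" using assms(1) by (rule incident_v1_cases)
  have "other_end G1 e v1 = u"
    using ends1[OF assms(1)] other_end_eq[OF _ True assms(2,3)] by blast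
  then show ?thesis using j by (simp add: embed_x)
qed (use assms in \<open>simp add: embed_off_v1\<close>)

lemma ends_Inl_embedE:
  assumes "E \<in> edges \<Gamma>" "Inl u \<in> ends \<Gamma> E"
  obtains e where "e \<in> edges G1" "u \<in> ends G1 e" "u \<noteq> v1" "E = embed e"
  using assms(1)
proof (cases rule: edges_compY_cases)
  case (old1 e)
  then show thesis using assms(2) that[of e] by (auto simp: embed_off_v1)
next
  case old2
  then show thesis using assms(2) by auto
next
  case (new j)
  then have u: "u = other_end G1 (x j) v1" using assms(2) by auto
  have xj: "x j \<in> edges G1" "v1 \<in> ends G1 (x j)"
    using x_incident[OF new(2)] by auto
  then have "u \<in> ends G1 (x j)" "u \<noteq> v1"
    using other_end_mem[OF conjunct1[OF ends1[OF xj(1)]] xj(2)] u by simp_all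
  then show thesis
    using that[of "x j"] xj(1) new embed_x by simp
qed

lemma incident_edges_Inl:
  "incident_edges \<Gamma> (Inl u) = (if u = v1 then {} else embed ` incident_edges G1 u)"
  using embed_edges Inl_mem_ends_embed
  by (auto elim!: ends_Inl_embedE simp: incident_edges_def)

lemma inj_on_colY_Inl:
  assumes "proper_3col G1 c"
  shows "inj_on (colY x c \<sigma> d) (incident_edges \<Gamma> (Inl u))"
proof -
  have "inj_on (colY x c \<sigma> d \<circ> embed) (incident_edges G1 u)"
    using inj_on_incident_edges_if_proper[OF assms]
    by (rule inj_on_cong[THEN iffD1, rotated]) (simp add: colY_embed incident_edges_def)
  then show ?thesis
    by (simp add: incident_edges_Inl inj_on_imageI)
qed

abbreviation side1 :: "('v1 + 'v2) set" where
  "side1 \<equiv> Inl ` (verts G1 - {v1})"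

lemma cut_side1:
  "{E \<in> edges \<Gamma>. C E = a \<and> odd (card (ends \<Gamma> E \<inter> side1))} = Inr ` {j \<in> {1,2,3}. C (Inr j) = a}"
proof -
  have "odd (card (ends \<Gamma> E \<inter> side1)) \<longleftrightarrow> (\<exists>j. E = Inr j)" if "E \<in> edges \<Gamma>" for E
    using that
  proof (cases rule: edges_compY_cases)
    case (old1 e)
    then have "ends \<Gamma> E \<inter> side1 = Inl ` ends G1 e" "card (ends G1 e) = 2"
      using ends1[of e] by auto
    then show ?thesis using old1 by (simp add: card_image)
  next
    case (old2 f)
    then have "ends \<Gamma> E \<inter> side1 = {}" by auto
    then show ?thesis using old2 by simp
  next
    case (new j)
    then have xj: "x j \<in> edges G1" "v1 \<in> ends G1 (x j)"
      using x_incident by auto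
    then have "other_end G1 (x j) v1 \<in> verts G1 - {v1}"
      using other_end_mem[OF conjunct1[OF ends1[OF xj(1)]] xj(2)] ends1[OF xj(1)] by auto
    then have "ends \<Gamma> E \<inter> side1 = {Inl (other_end G1 (x j) v1)}"
      using new by auto
    then show ?thesis using new by simp
  qed
  then have "{E \<in> edges \<Gamma>. C E = a \<and> odd (card (ends \<Gamma> E \<inter> side1))} =
      {E \<in> edges \<Gamma>. C E = a \<and> (\<exists>j. E = Inr j)}"
    by blast
  also have "\<dots> = Inr ` {j \<in> {1,2,3}. C (Inr j) = a}"
    by auto
  finally show ?thesis .
qed

lemma degree_side1:
  assumes "w \<in> side1"
  shows "card (incident_edges \<Gamma> w) = 3"
proof -
  obtain u where u: "w = Inl u" "u \<in> verts G1" "u \<noteq> v1" using assms by blast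
  have "incident_edges G1 u \<subseteq> edges G1" by (auto simp: incident_edges_def)
  then have "card (embed ` incident_edges G1 u) = card (incident_edges G1 u)"
    using card_image inj_on_subset[OF inj_on_embed] by blast
  then show ?thesis
    using u cubic1 by (simp add: incident_edges_Inl cubic_def)
qed

lemma cut_colours_distinct:
  assumes "proper_3col \<Gamma> C"
  shows "inj_on (\<lambda>j. C (Inr j)) {1,2,3}"
proof (rule three_fibres_same_parity_imp_inj)
  have "finite side1" using cubic1 by (simp add: cubic_def multigraph_def)
  show "even (card {j \<in> {1,2,3::nat}. C (Inr j) = a}) \<longleftrightarrow> even (card side1)"
    if "a \<in> {1,2,3}" for a
    using parity_lemma[OF finite_edges \<open>finite side1\<close> degree_side1 assms that]
    by (simp add: cut_side1 card_image)
  show "C (Inr 1) \<in> {1,2,3}" "C (Inr 2) \<in> {1,2,3}" "C (Inr 3) \<in> {1,2,3}"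
    using assms by (simp_all add: proper_3col_def)
qed

lemma reflects_embed: "reflects_kempe_chains \<Gamma> G1 embed"
  unfolding reflects_kempe_chains_def
proof (intro allI impI, elim conjE)
  fix C a b e f
  assume C: "proper_3col \<Gamma> C" and ab: "a \<in> {1,2,3}" "b \<in> {1,2,3}" "a \<noteq> b"
    and adj: "kempe_adj G1 (C \<circ> embed) a b e f"
  then have ef: "e \<in> edges G1" "f \<in> edges G1" "C (embed e) \<in> {a, b}" "C (embed f) \<in> {a, b}"
    by (auto simp: kempe_adj_def)
  obtain u where u: "u \<in> ends G1 e" "u \<in> ends G1 f"
    using adj by (auto simp: kempe_adj_def)
  show "embed f \<in> kempe_chain \<Gamma> C a b (embed e)"
  proof (cases "u = v1")
    case False
    then have "Inl u \<in> ends \<Gamma> (embed e) \<inter> ends \<Gamma> (embed f)"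
      using ef u Inl_mem_ends_embed by blast
    then have "kempe_adj \<Gamma> C a b (embed e) (embed f)"
      unfolding kempe_adj_def using ef embed_edges by blast
    then show ?thesis by (rule kempe_chain_step[OF kempe_chain_self])
  next
    case True
    text \<open>Both edges end at v1, so they became two of the three new edges, which are coloured
      differently in every proper colouring.\<close>
    obtain i where i: "i \<in> {1,2,3}" "e = x i"
      using u(1)[unfolded True] ef(1) by (rule incident_v1_cases)
    obtain j where j: "j \<in> {1,2,3}" "f = x j"
      using u(2)[unfolded True] ef(2) by (rule incident_v1_cases)
    show ?thesis
    proof (cases "i = j")
      case False
      have "Inr j \<in> kempe_chain \<Gamma> C a b (Inr i)"
      proof (rule kempe_chain_rigid_pair[OF C ab])
        show "C' (Inr i) = C' (Inr j) \<longleftrightarrow> C (Inr i) = C (Inr j)" if "proper_3col \<Gamma> C'" for C'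
          using inj_on_contraD[OF cut_colours_distinct[OF that] False i(1) j(1)]
            inj_on_contraD[OF cut_colours_distinct[OF C] False i(1) j(1)] by simp
      qed (use i j ef in \<open>simp_all add: embed_x\<close>)
      then show ?thesis using i j by (simp add: embed_x)
    qed (use i j in simp)
  qed
qed

lemma colY_range:
  assumes "proper_3col G1 c" "proper_3col G2 d" "bij_betw \<sigma> {1,2,3} {1,2,3::nat}"
  shows "\<forall>E\<in>edges \<Gamma>. colY x c \<sigma> d E \<in> {1,2,3}"
proof
  fix E assume "E \<in> edges \<Gamma>"
  then show "colY x c \<sigma> d E \<in> {1,2,3}"
  proof (cases rule: edges_compY_cases)
    case (old2 f)
    then have "d f \<in> {1,2,3}" using assms(2) by (simp add: proper_3col_def)
    then show ?thesis using old2 bij_betw_apply[OF assms(3)] by (simp add: colY_def)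
  qed (use assms(1) x_incident in \<open>simp_all add: colY_def proper_3col_def\<close>)
qed

lemma colY_mirror_edge:
  assumes "E \<in> edges (compY G2 v2 y G1 v1 x)" "\<forall>j\<in>{1,2,3}. \<sigma> (d (y j)) = c (x j)"
  shows "colY x c \<sigma> d (mirror_edge E) = colY y (\<sigma> \<circ> d) id c E"
  using assms by (auto simp: colY_def compY_def)

lemma proper_colY:
  assumes "proper_3col G1 c" "proper_3col G2 d" "bij_betw \<sigma> {1,2,3} {1,2,3::nat}"
    and "\<forall>j\<in>{1,2,3}. \<sigma> (d (y j)) = c (x j)"
  shows "proper_3col \<Gamma> (colY x c \<sigma> d)"
proof (rule proper_3colI_incident)
  show "\<forall>E\<in>edges \<Gamma>. colY x c \<sigma> d E \<in> {1,2,3}"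
    using assms(1-3) by (rule colY_range)
  fix w
  show "inj_on (colY x c \<sigma> d) (incident_edges \<Gamma> w)"
  proof (cases w)
    case (Inl u)
    then show ?thesis using inj_on_colY_Inl[OF assms(1)] by simp
  next
    case (Inr u)
    text \<open>At a vertex coming from G2, look at the mirrored composition.\<close>
    let ?\<Gamma>' = "compY G2 v2 y G1 v1 x"
    have "incident_edges \<Gamma> w = mirror_edge ` incident_edges ?\<Gamma>' (Inl u)"
      using incident_edges_iso[OF bij_betw_mirror_edge_compY[of G2 v2 y G1 v1 x]
          ends_compY_mirror_edge inj_swap_sum, where w = "Inl u"]
      by (simp add: Inr)
    moreover have "inj_on (colY x c \<sigma> d \<circ> mirror_edge) (incident_edges ?\<Gamma>' (Inl u)) \<longleftrightarrow>
        inj_on (colY y (\<sigma> \<circ> d) id c) (incident_edges ?\<Gamma>' (Inl u))"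
      by (rule inj_on_cong)
        (simp add: colY_mirror_edge[where \<sigma> = \<sigma> and d = d and c = c, OF _ assms(4)] incident_edges_def)
    moreover have "inj_on (colY y (\<sigma> \<circ> d) id c) (incident_edges ?\<Gamma>' (Inl u))"
      using Y_composition.inj_on_colY_Inl[OF mirrored proper_3col_permute[OF assms(2,3)]] .
    ultimately show ?thesis by (simp add: inj_on_imageI)
  qed
qed

lemma kempe_equiv_side1:
  assumes "proper_3col \<Gamma> (colY x c1 \<sigma>1 d1)"
    and "kempe_equiv \<Gamma> (colY x c1 \<sigma>1 d1) (colY x c2 \<sigma>2 d2)"
  shows "kempe_equiv G1 c1 c2"
proof (rule kempe_equiv_agree_cong)
  show "kempe_equiv G1 (colY x c1 \<sigma>1 d1 \<circ> embed) (colY x c2 \<sigma>2 d2 \<circ> embed)"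
    using kempe_equiv_pullback[OF assms(2,1) reflects_embed embed_edges finite_edges1] .
qed (simp_all add: colY_embed)

theorem kempe_equiv_factors:
  assumes c1: "proper_3col G1 c1" and d1: "proper_3col G2 d1" and d2: "proper_3col G2 d2"
    and \<sigma>1: "bij_betw \<sigma>1 {1,2,3} {1,2,3::nat}" "\<forall>j\<in>{1,2,3}. \<sigma>1 (d1 (y j)) = c1 (x j)"
    and \<sigma>2: "bij_betw \<sigma>2 {1,2,3} {1,2,3::nat}" "\<forall>j\<in>{1,2,3}. \<sigma>2 (d2 (y j)) = c2 (x j)"
    and equiv: "kempe_equiv \<Gamma> (colY x c1 \<sigma>1 d1) (colY x c2 \<sigma>2 d2)"
  shows "kempe_equiv G1 c1 c2 \<and> kempe_equiv G2 d1 d2"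
proof
  have proper: "proper_3col \<Gamma> (colY x c1 \<sigma>1 d1)"
    using proper_colY[OF c1 d1 \<sigma>1] .
  then show "kempe_equiv G1 c1 c2"
    using equiv by (rule kempe_equiv_side1)
  let ?\<Gamma>' = "compY G2 v2 y G1 v1 x"
  note bij = bij_betw_mirror_edge_compY[of G2 v2 y G1 v1 x]
  have "kempe_equiv ?\<Gamma>' (colY x c1 \<sigma>1 d1 \<circ> mirror_edge) (colY x c2 \<sigma>2 d2 \<circ> mirror_edge)"
    using kempe_equiv_pullback[OF equiv proper
        reflects_kempe_chains_iso[OF bij ends_compY_mirror_edge]] bij Y_composition.finite_edges[OF mirrored] by (simp add: bij_betw_def)
  then have "kempe_equiv ?\<Gamma>' (colY y (\<sigma>1 \<circ> d1) id c1) (colY y (\<sigma>2 \<circ> d2) id c2)"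
    by (rule kempe_equiv_agree_cong) (simp_all add: colY_mirror_edge \<sigma>1(2) \<sigma>2(2))
  moreover have "proper_3col ?\<Gamma>' (colY y (\<sigma>1 \<circ> d1) id c1)"
    using \<sigma>1(2)
    by (intro Y_composition.proper_colY[OF mirrored proper_3col_permute[OF d1 \<sigma>1(1)] c1])
      (simp_all add: bij_betw_id)
  ultimately have "kempe_equiv G2 (\<sigma>1 \<circ> d1) (\<sigma>2 \<circ> d2)"
    using Y_composition.kempe_equiv_side1[OF mirrored] by blast
  then show "kempe_equiv G2 d1 d2"
    by (rule kempe_equiv_unpermute[OF _ Y_composition.finite_edges1[OF mirrored] d1 d2 \<sigma>1(1) \<sigma>2(1)])
qed

end

section \<open>H composition\<close>

locale H_composition =
  fixes G1 :: "('v1, 'e1) mgraph" and x :: 'e1 and s11 s12 :: 'v1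
    and G2 :: "('v2, 'e2) mgraph" and y :: 'e2 and s21 s22 :: 'v2
  assumes cubic1: "cubic G1" and cubic2: "cubic G2"
    and choice1: "valid_H_choice G1 x s11 s12" and choice2: "valid_H_choice G2 y s21 s22"
begin

abbreviation "\<Gamma> \<equiv> compH G1 x s11 s12 G2 y s21 s22"

lemma mirrored: "H_composition G2 y s21 s22 G1 x s11 s12"
  using cubic1 cubic2 choice1 choice2 by unfold_locales

lemma finite_edges1: "finite (edges G1)"
  and ends1: "e \<in> edges G1 \<Longrightarrow> card (ends G1 e) = 2 \<and> ends G1 e \<subseteq> verts G1"
  using cubic1 by (auto simp: cubic_def multigraph_def)

lemma finite_edges: "finite (edges \<Gamma>)"
  using cubic1 cubic2 by (simp add: compH_def cubic_def multigraph_def)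

lemma edges_compH_simps [simp]:
  "Inl (Inl e) \<in> edges \<Gamma> \<longleftrightarrow> e \<in> edges G1 \<and> e \<noteq> x"
  "Inl (Inr f) \<in> edges \<Gamma> \<longleftrightarrow> f \<in> edges G2 \<and> f \<noteq> y"
  "Inr j \<in> edges \<Gamma> \<longleftrightarrow> j \<in> {1,2}"
  by (auto simp: compH_def)

lemma ends_compH_simps [simp]:
  "ends \<Gamma> (Inl (Inl e)) = Inl ` ends G1 e"
  "ends \<Gamma> (Inl (Inr f)) = Inr ` ends G2 f"
  "ends \<Gamma> (Inr j) = (if j = 1 then {Inl s11, Inr s21} else {Inl s12, Inr s22})"
  by (simp_all add: compH_def)

lemma x_edge: "x \<in> edges G1" "ends G1 x = {s11, s12}" "s11 \<noteq> s12"
  using choice1 ends1[of x] by (auto simp: valid_H_choice_def)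

text \<open>The edge of \<Gamma> at Inl u that takes the place of the edge e of G1 at u; only x
  splits, into the new edge Inr 1 at s11 and Inr 2 at s12.\<close>

definition edge_at :: "'v1 \<Rightarrow> 'e1 \<Rightarrow> ('e1 + 'e2) + nat" where
  "edge_at u e = (if e = x then (if u = s11 then Inr 1 else Inr 2) else Inl (Inl e))"

definition embed :: "'e1 \<Rightarrow> ('e1 + 'e2) + nat" where
  "embed e = (if e = x then Inr 1 else Inl (Inl e))"

lemma edge_at_edges: "e \<in> edges G1 \<Longrightarrow> edge_at u e \<in> edges \<Gamma>"
  by (simp add: edge_at_def)

lemma embed_edges: "embed ` edges G1 \<subseteq> edges \<Gamma>"
  by (auto simp: embed_def)

lemma inj_edge_at: "inj (edge_at u)"
  by (auto simp: inj_def edge_at_def split: if_splits)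

lemma colH_edge_at: "colH x c \<sigma> d (edge_at u e) = c e"
  by (simp add: edge_at_def colH_def)

lemma colH_embed: "colH x c \<sigma> d (embed e) = c e"
  by (simp add: embed_def colH_def)

lemma edges_compH_cases:
  assumes "E \<in> edges \<Gamma>"
  obtains (old1) e where "E = Inl (Inl e)" "e \<in> edges G1" "e \<noteq> x"
    | (old2) f where "E = Inl (Inr f)" "f \<in> edges G2" "f \<noteq> y"
    | (new1) "E = Inr 1"
    | (new2) "E = Inr 2"
  using assms by (auto simp: compH_def)

lemma Inl_mem_ends_edge_at:
  assumes "e \<in> edges G1" "u \<in> ends G1 e"
  shows "Inl u \<in> ends \<Gamma> (edge_at u e)"
  using assms x_edge by (auto simp: edge_at_def)

lemma ends_Inl_edge_atE:
  assumes "E \<in> edges \<Gamma>" "Inl u \<in> ends \<Gamma> E"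
  obtains e where "e \<in> edges G1" "u \<in> ends G1 e" "E = edge_at u e"
  using assms(1)
proof (cases rule: edges_compH_cases)
  case (old1 e)
  then show thesis using assms(2) that[of e] by (auto simp: edge_at_def)
next
  case old2
  then show thesis using assms(2) by auto
next
  case new1
  then show thesis using assms(2) that[of x] x_edge by (simp add: edge_at_def)
next
  case new2
  then show thesis using assms(2) that[of x] x_edge by (simp add: edge_at_def)
qed

lemma incident_edges_Inl: "incident_edges \<Gamma> (Inl u) = edge_at u ` incident_edges G1 u"
  using edge_at_edges Inl_mem_ends_edge_at
  by (auto elim!: ends_Inl_edge_atE simp: incident_edges_def)

abbreviation side1 :: "('v1 + 'v2) set" where
  "side1 \<equiv> Inl ` verts G1"

lemma degree_side1:
  assumes "w \<in> side1"
  shows "card (incident_edges \<Gamma> w) = 3"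
proof -
  obtain u where u: "w = Inl u" "u \<in> verts G1" using assms by blast
  have "card (edge_at u ` incident_edges G1 u) = card (incident_edges G1 u)"
    using card_image inj_on_subset[OF inj_edge_at] by blast
  then show ?thesis
    using u cubic1 by (simp add: incident_edges_Inl cubic_def)
qed

lemma cut_side1:
  "{E \<in> edges \<Gamma>. C E = a \<and> odd (card (ends \<Gamma> E \<inter> side1))} = Inr ` {j \<in> {1,2}. C (Inr j) = a}"
proof -
  have "odd (card (ends \<Gamma> E \<inter> side1)) \<longleftrightarrow> (\<exists>j. E = Inr j)" if "E \<in> edges \<Gamma>" for E
    using that
  proof (cases rule: edges_compH_cases)
    case (old1 e)
    then have "ends \<Gamma> E \<inter> side1 = Inl ` ends G1 e" "card (ends G1 e) = 2"
      using ends1[of e] by auto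
    then show ?thesis using old1 by (simp add: card_image)
  next
    case (old2 f)
    then have "ends \<Gamma> E \<inter> side1 = {}" by auto
    then show ?thesis using old2 by simp
  next
    case new1
    then have "ends \<Gamma> E \<inter> side1 = {Inl s11}" using x_edge ends1[of x] by auto
    then show ?thesis using new1 by simp
  next
    case new2
    then have "ends \<Gamma> E \<inter> side1 = {Inl s12}" using x_edge ends1[of x] by auto
    then show ?thesis using new2 by simp
  qed
  then have "{E \<in> edges \<Gamma>. C E = a \<and> odd (card (ends \<Gamma> E \<inter> side1))} =
      {E \<in> edges \<Gamma>. C E = a \<and> (\<exists>j. E = Inr j)}"
    by blast
  also have "\<dots> = Inr ` {j \<in> {1,2}. C (Inr j) = a}"
    by auto
  finally show ?thesis .
qed

lemma cut_colours_equal: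
  assumes "proper_3col \<Gamma> C"
  shows "C (Inr 1) = C (Inr 2)"
proof (rule two_fibres_same_parity_imp_eq)
  have "finite side1" using cubic1 by (simp add: cubic_def multigraph_def)
  show "even (card {j \<in> {1,2::nat}. C (Inr j) = a}) \<longleftrightarrow> even (card side1)"
    if "a \<in> {1,2,3}" for a
    using parity_lemma[OF finite_edges \<open>finite side1\<close> degree_side1 assms that]
    by (simp add: cut_side1 card_image)
  show "C (Inr 1) \<in> {1,2,3}" "C (Inr 2) \<in> {1,2,3}"
    using assms by (simp_all add: proper_3col_def)
qed

lemma edge_at_same_chain:
  assumes "proper_3col \<Gamma> C" "a \<in> {1,2,3}" "b \<in> {1,2,3}" "a \<noteq> b"
    and "e \<in> edges G1" "C (embed e) \<in> {a, b}"
  shows "edge_at u e \<in> kempe_chain \<Gamma> C a b (embed e)"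
proof (cases "e = x \<and> u \<noteq> s11")
  case True
  have "Inr 2 \<in> kempe_chain \<Gamma> C a b (Inr 1)"
  proof (rule kempe_chain_rigid_pair[OF assms(1-4)])
    show "C' (Inr 1) = C' (Inr 2) \<longleftrightarrow> C (Inr 1) = C (Inr 2)" if "proper_3col \<Gamma> C'" for C'
      using cut_colours_equal[OF that] cut_colours_equal[OF assms(1)] by simp
  qed (use assms True cut_colours_equal[OF assms(1)] in \<open>simp_all add: embed_def\<close>)
  then show ?thesis using True by (simp add: edge_at_def embed_def)
qed (auto simp: edge_at_def embed_def)

lemma reflects_embed: "reflects_kempe_chains \<Gamma> G1 embed"
  unfolding reflects_kempe_chains_def
proof (intro allI impI, elim conjE)
  fix C a b e f
  assume C: "proper_3col \<Gamma> C" and ab: "a \<in> {1,2,3}" "b \<in> {1,2,3}" "a \<noteq> b"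
    and adj: "kempe_adj G1 (C \<circ> embed) a b e f"
  then have ef: "e \<in> edges G1" "f \<in> edges G1" "C (embed e) \<in> {a, b}" "C (embed f) \<in> {a, b}"
    by (auto simp: kempe_adj_def)
  obtain u where u: "u \<in> ends G1 e" "u \<in> ends G1 f"
    using adj by (auto simp: kempe_adj_def)
  have colour: "C (edge_at u g) = C (embed g)" for g
    using cut_colours_equal[OF C] by (simp add: edge_at_def embed_def)
  have "Inl u \<in> ends \<Gamma> (edge_at u e) \<inter> ends \<Gamma> (edge_at u f)"
    using u ef(1,2) incident_edges_Inl by (auto simp: incident_edges_def)
  then have "kempe_adj \<Gamma> C a b (edge_at u e) (edge_at u f)"
    unfolding kempe_adj_def using ef edge_at_edges colour by auto
  then have "edge_at u f \<in> kempe_chain \<Gamma> C a b (embed e)"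
    by (rule kempe_chain_step[OF edge_at_same_chain[OF C ab ef(1,3)]])
  moreover have "embed f \<in> kempe_chain \<Gamma> C a b (edge_at u f)"
    using kempe_chain_sym[OF edge_at_same_chain[OF C ab ef(2,4)]] .
  ultimately show "embed f \<in> kempe_chain \<Gamma> C a b (embed e)"
    by (rule kempe_chain_trans)
qed

lemma colH_range:
  assumes "proper_3col G1 c" "proper_3col G2 d" "bij_betw \<sigma> {1,2,3} {1,2,3::nat}"
  shows "\<forall>E\<in>edges \<Gamma>. colH x c \<sigma> d E \<in> {1,2,3}"
proof
  fix E assume "E \<in> edges \<Gamma>"
  then show "colH x c \<sigma> d E \<in> {1,2,3}"
  proof (cases rule: edges_compH_cases)
    case (old2 f)
    then have "d f \<in> {1,2,3}" using assms(2) by (simp add: proper_3col_def)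
    then show ?thesis using old2 bij_betw_apply[OF assms(3)] by (simp add: colH_def)
  qed (use assms(1) x_edge(1) in \<open>simp_all add: colH_def proper_3col_def\<close>)
qed

lemma colH_mirror_edge:
  assumes "E \<in> edges (compH G2 y s21 s22 G1 x s11 s12)" "\<sigma> (d y) = c x"
  shows "colH x c \<sigma> d (mirror_edge E) = colH y (\<sigma> \<circ> d) id c E"
  using assms by (auto simp: colH_def compH_def)

lemma inj_on_colH_Inl:
  assumes "proper_3col G1 c"
  shows "inj_on (colH x c \<sigma> d) (incident_edges \<Gamma> (Inl u))"
proof -
  have "inj_on (colH x c \<sigma> d \<circ> edge_at u) (incident_edges G1 u)"
    using inj_on_incident_edges_if_proper[OF assms] by (simp add: colH_edge_at comp_def)
  then show ?thesis by (simp add: incident_edges_Inl inj_on_imageI)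
qed

lemma proper_colH:
  assumes "proper_3col G1 c" "proper_3col G2 d" "bij_betw \<sigma> {1,2,3} {1,2,3::nat}"
    and "\<sigma> (d y) = c x"
  shows "proper_3col \<Gamma> (colH x c \<sigma> d)"
proof (rule proper_3colI_incident)
  show "\<forall>E\<in>edges \<Gamma>. colH x c \<sigma> d E \<in> {1,2,3}"
    using assms(1-3) by (rule colH_range)
  fix w
  show "inj_on (colH x c \<sigma> d) (incident_edges \<Gamma> w)"
  proof (cases w)
    case (Inl u)
    then show ?thesis using inj_on_colH_Inl[OF assms(1)] by simp
  next
    case (Inr u)
    let ?\<Gamma>' = "compH G2 y s21 s22 G1 x s11 s12"
    have "incident_edges \<Gamma> w = mirror_edge ` incident_edges ?\<Gamma>' (Inl u)"
      using incident_edges_iso[OF bij_betw_mirror_edge_compH[of G2 y s21 s22 G1 x s11 s12]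
          ends_compH_mirror_edge inj_swap_sum, where w = "Inl u"]
      by (simp add: Inr)
    moreover have "inj_on (colH x c \<sigma> d \<circ> mirror_edge) (incident_edges ?\<Gamma>' (Inl u)) \<longleftrightarrow>
        inj_on (colH y (\<sigma> \<circ> d) id c) (incident_edges ?\<Gamma>' (Inl u))"
      by (rule inj_on_cong)
        (simp add: colH_mirror_edge[where \<sigma> = \<sigma> and d = d and c = c, OF _ assms(4)] incident_edges_def)
    moreover have "inj_on (colH y (\<sigma> \<circ> d) id c) (incident_edges ?\<Gamma>' (Inl u))"
      using H_composition.inj_on_colH_Inl[OF mirrored proper_3col_permute[OF assms(2,3)]] .
    ultimately show ?thesis by (simp add: inj_on_imageI)
  qed
qed

lemma kempe_equiv_side1:
  assumes "proper_3col \<Gamma> (colH x c1 \<sigma>1 d1)"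
    and "kempe_equiv \<Gamma> (colH x c1 \<sigma>1 d1) (colH x c2 \<sigma>2 d2)"
  shows "kempe_equiv G1 c1 c2"
proof (rule kempe_equiv_agree_cong)
  show "kempe_equiv G1 (colH x c1 \<sigma>1 d1 \<circ> embed) (colH x c2 \<sigma>2 d2 \<circ> embed)"
    using kempe_equiv_pullback[OF assms(2,1) reflects_embed embed_edges finite_edges1] .
qed (simp_all add: colH_embed)

theorem kempe_equiv_factors:
  assumes c1: "proper_3col G1 c1" and d1: "proper_3col G2 d1" and d2: "proper_3col G2 d2"
    and \<sigma>1: "bij_betw \<sigma>1 {1,2,3} {1,2,3::nat}" "\<sigma>1 (d1 y) = c1 x"
    and \<sigma>2: "bij_betw \<sigma>2 {1,2,3} {1,2,3::nat}" "\<sigma>2 (d2 y) = c2 x"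
    and equiv: "kempe_equiv \<Gamma> (colH x c1 \<sigma>1 d1) (colH x c2 \<sigma>2 d2)"
  shows "kempe_equiv G1 c1 c2 \<and> kempe_equiv G2 d1 d2"
proof
  have proper: "proper_3col \<Gamma> (colH x c1 \<sigma>1 d1)"
    using proper_colH[OF c1 d1 \<sigma>1] .
  then show "kempe_equiv G1 c1 c2"
    using equiv by (rule kempe_equiv_side1)
  let ?\<Gamma>' = "compH G2 y s21 s22 G1 x s11 s12"
  note bij = bij_betw_mirror_edge_compH[of G2 y s21 s22 G1 x s11 s12]
  have "kempe_equiv ?\<Gamma>' (colH x c1 \<sigma>1 d1 \<circ> mirror_edge) (colH x c2 \<sigma>2 d2 \<circ> mirror_edge)"
    using kempe_equiv_pullback[OF equiv proper
        reflects_kempe_chains_iso[OF bij ends_compH_mirror_edge]] bij H_composition.finite_edges[OF mirrored] by (simp add: bij_betw_def)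
  then have "kempe_equiv ?\<Gamma>' (colH y (\<sigma>1 \<circ> d1) id c1) (colH y (\<sigma>2 \<circ> d2) id c2)"
    by (rule kempe_equiv_agree_cong) (simp_all add: colH_mirror_edge \<sigma>1(2) \<sigma>2(2))
  moreover have "proper_3col ?\<Gamma>' (colH y (\<sigma>1 \<circ> d1) id c1)"
    using \<sigma>1(2)
    by (intro H_composition.proper_colH[OF mirrored proper_3col_permute[OF d1 \<sigma>1(1)] c1])
      (simp_all add: bij_betw_id)
  ultimately have "kempe_equiv G2 (\<sigma>1 \<circ> d1) (\<sigma>2 \<circ> d2)"
    using H_composition.kempe_equiv_side1[OF mirrored] by blast
  then show "kempe_equiv G2 d1 d2"
    by (rule kempe_equiv_unpermute[OF _ H_composition.finite_edges1[OF mirrored] d1 d2 \<sigma>1(1) \<sigma>2(1)])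
qed

end

theorem lemma11:
  fixes G1 :: "('v1, 'e1) mgraph" and G2 :: "('v2, 'e2) mgraph"
  assumes "cubic G1" and "cubic G2"
    and "three_edge_colorable G1" and "three_edge_colorable G2"
  shows
   "(\<forall>v1 x v2 y c1 c2 d1 d2 \<sigma>1 \<sigma>2.
       valid_Y_choice G1 v1 x \<and> valid_Y_choice G2 v2 y \<and>
       proper_3col G1 c1 \<and> proper_3col G1 c2 \<and> proper_3col G2 d1 \<and> proper_3col G2 d2 \<and>
       bij_betw \<sigma>1 {1,2,3} {1,2,3} \<and> (\<forall>j\<in>{1,2,3}. \<sigma>1 (d1 (y j)) = c1 (x j)) \<and>
       bij_betw \<sigma>2 {1,2,3} {1,2,3} \<and> (\<forall>j\<in>{1,2,3}. \<sigma>2 (d2 (y j)) = c2 (x j)) \<and>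
       kempe_equiv (compY G1 v1 x G2 v2 y) (colY x c1 \<sigma>1 d1) (colY x c2 \<sigma>2 d2)
       \<longrightarrow> kempe_equiv G1 c1 c2 \<and> kempe_equiv G2 d1 d2)
  \<and> (\<forall>x s11 s12 y s21 s22 c1 c2 d1 d2 \<sigma>1 \<sigma>2.
       valid_H_choice G1 x s11 s12 \<and> valid_H_choice G2 y s21 s22 \<and>
       proper_3col G1 c1 \<and> proper_3col G1 c2 \<and> proper_3col G2 d1 \<and> proper_3col G2 d2 \<and>
       bij_betw \<sigma>1 {1,2,3} {1,2,3} \<and> \<sigma>1 (d1 y) = c1 x \<and>
       bij_betw \<sigma>2 {1,2,3} {1,2,3} \<and> \<sigma>2 (d2 y) = c2 x \<and>
       kempe_equiv (compH G1 x s11 s12 G2 y s21 s22) (colH x c1 \<sigma>1 d1) (colH x c2 \<sigma>2 d2)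
       \<longrightarrow> kempe_equiv G1 c1 c2 \<and> kempe_equiv G2 d1 d2)"
  \<comment> \<open>3-edge-colourability is implied by the colourings c1 and d1.\<close>
proof (rule conjI; intro allI impI)
  fix v1 x v2 y c1 c2 d1 d2 \<sigma>1 \<sigma>2
  assume hyp: "valid_Y_choice G1 v1 x \<and> valid_Y_choice G2 v2 y \<and>
       proper_3col G1 c1 \<and> proper_3col G1 c2 \<and> proper_3col G2 d1 \<and> proper_3col G2 d2 \<and>
       bij_betw \<sigma>1 {1,2,3} {1,2,3} \<and> (\<forall>j\<in>{1,2,3}. \<sigma>1 (d1 (y j)) = c1 (x j)) \<and>
       bij_betw \<sigma>2 {1,2,3} {1,2,3} \<and> (\<forall>j\<in>{1,2,3}. \<sigma>2 (d2 (y j)) = c2 (x j)) \<and>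
       kempe_equiv (compY G1 v1 x G2 v2 y) (colY x c1 \<sigma>1 d1) (colY x c2 \<sigma>2 d2)"
  then have "Y_composition G1 v1 x G2 v2 y"
    using assms(1,2) by (simp add: Y_composition_def)
  then show "kempe_equiv G1 c1 c2 \<and> kempe_equiv G2 d1 d2"
    using Y_composition.kempe_equiv_factors[of G1 v1 x G2 v2 y c1 d1 d2 \<sigma>1 \<sigma>2 c2] hyp by blast
next
  fix x s11 s12 y s21 s22 c1 c2 d1 d2 \<sigma>1 \<sigma>2
  assume hyp: "valid_H_choice G1 x s11 s12 \<and> valid_H_choice G2 y s21 s22 \<and>
       proper_3col G1 c1 \<and> proper_3col G1 c2 \<and> proper_3col G2 d1 \<and> proper_3col G2 d2 \<and>
       bij_betw \<sigma>1 {1,2,3} {1,2,3} \<and> \<sigma>1 (d1 y) = c1 x \<and>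
       bij_betw \<sigma>2 {1,2,3} {1,2,3} \<and> \<sigma>2 (d2 y) = c2 x \<and>
       kempe_equiv (compH G1 x s11 s12 G2 y s21 s22) (colH x c1 \<sigma>1 d1) (colH x c2 \<sigma>2 d2)"
  then have "H_composition G1 x s11 s12 G2 y s21 s22"
    using assms(1,2) by (simp add: H_composition_def)
  then show "kempe_equiv G1 c1 c2 \<and> kempe_equiv G2 d1 d2"
    using H_composition.kempe_equiv_factors[of G1 x s11 s12 G2 y s21 s22 c1 d1 d2 \<sigma>1 \<sigma>2 c2] hyp
    by blast
qed

end
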